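(* Let $n\ge 7$ and let $D$ be a total dominating set of $G_{n,4}$. Then $|D\cap H_i^4|\ge 4$ for every $i$ with $1\le i\le n$. Moreover, if for some $i$ with $1\le i\le n$ we have $|N(v)\cap D|=1$ for every vertex $v\in H_i^4$, then $D\setminus (D\cap H_i^4)$ is a total dominating set of $G_i^4$.
   Context: $G_{n,m}=C_n\times C_m$ (Cartesian product of cycles) has vertex set $\{x_{ij}: 1\le i\le n,\ 1\le j\le m\}$, where $x_{ij}$ and $x_{i'j'}$ are adjacent iff either $i=i'$ and $j,j'$ are adjacent in the cycle $C_m$ on $\{1,\dots,m\}$, or $j=j'$ and $i,i'$ are adjacent in the cycle $C_n$ on $\{1,\dots,n\}$. $N(v)$ is the open neighbourhood of $v$. Let $Y_i=\{x_{ij}:1\le j\le m\}$ and $H_i^j=Y_i\cup Y_{i+1}\cup\cdots\cup Y_{i+j-1}$ (first indices modulo $n$). $G_i^j$ is the graph obtained from $G_{n,4}-H_i^j$ by adding the edges $x_{(i-1)k}x_{(i+j)k}$, $1\le k\le 4$ (indices modulo $n$); thus $G_i^4\cong G_{n-4,4}$. A set $D$ is a total dominating set of a graph $G$ if every vertex of $G$ has a neighbour (in $G$) in $D$. *)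

theory Defs
  imports Main
begin

(* Indices are 1-based as in the paper: vertex x_{ij} is the pair (i,j),
   1 <= i <= n, 1 <= j <= m. *)

(* reduce an index modulo n into the range {1..n} (0 maps to n) *)
definition wrap :: "nat \<Rightarrow> nat \<Rightarrow> nat" where
  "wrap n t = ((t + n - 1) mod n) + 1"

definition cyc_adj :: "nat \<Rightarrow> nat \<Rightarrow> nat \<Rightarrow> bool" where
  "cyc_adj n a b \<longleftrightarrow> a \<in> {1..n} \<and> b \<in> {1..n} \<and> a \<noteq> b \<and>
      (b = a mod n + 1 \<or> a = b mod n + 1)"

definition gverts :: "nat \<Rightarrow> nat \<Rightarrow> (nat \<times> nat) set" where
  "gverts n m = {1..n} \<times> {1..m}"

definition gadj :: "nat \<Rightarrow> nat \<Rightarrow> nat \<times> nat \<Rightarrow> nat \<times> nat \<Rightarrow> bool" where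
  "gadj n m u v \<longleftrightarrow>
     (fst u = fst v \<and> fst u \<in> {1..n} \<and> cyc_adj m (snd u) (snd v)) \<or>
     (snd u = snd v \<and> snd u \<in> {1..m} \<and> cyc_adj n (fst u) (fst v))"

definition nbhd :: "'a set \<Rightarrow> ('a \<Rightarrow> 'a \<Rightarrow> bool) \<Rightarrow> 'a \<Rightarrow> 'a set" where
  "nbhd V E v = {u \<in> V. E v u}"

definition total_dom :: "'a set \<Rightarrow> ('a \<Rightarrow> 'a \<Rightarrow> bool) \<Rightarrow> 'a set \<Rightarrow> bool" where
  "total_dom V E D \<longleftrightarrow> D \<subseteq> V \<and> (\<forall>v\<in>V. \<exists>u\<in>D. E v u)"

(* H_i^j = Y_i \<union> ... \<union> Y_{i+j-1}, first indices mod n *)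
definition Hset :: "nat \<Rightarrow> nat \<Rightarrow> nat \<Rightarrow> nat \<Rightarrow> (nat \<times> nat) set" where
  "Hset n m i j = {(wrap n (i + t), k) | t k. t < j \<and> k \<in> {1..m}}"

(* G_i^j: from G_{n,4} - H_i^j add edges x_{(i-1)k} x_{(i+j)k}, 1 <= k <= 4 *)
definition Gij_verts :: "nat \<Rightarrow> nat \<Rightarrow> nat \<Rightarrow> (nat \<times> nat) set" where
  "Gij_verts n i j = gverts n 4 - Hset n 4 i j"

definition Gij_adj :: "nat \<Rightarrow> nat \<Rightarrow> nat \<Rightarrow> nat \<times> nat \<Rightarrow> nat \<times> nat \<Rightarrow> bool" where
  "Gij_adj n i j u v \<longleftrightarrow>
     (u \<in> Gij_verts n i j \<and> v \<in> Gij_verts n i j \<and> gadj n 4 u v) \<or>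
     (\<exists>k\<in>{1..4}. (u = (wrap n (i - 1), k) \<and> v = (wrap n (i + j), k)) \<or>
                 (v = (wrap n (i - 1), k) \<and> u = (wrap n (i + j), k)))"

end

theory Submission
  imports Defs
begin

(*
  Rows i-1, ..., i+4 of the torus form a band which, for n >= 6, is an injective copy of six
  rows of the ladder P x C_4, and the neighbourhood of a band vertex in rows i, ..., i+3 is the
  image of its ladder neighbourhood. Both claims thus become finite statements about the set of
  ladder positions occupied by D.

  The eight vertices in the two middle rows of H_i^4 form two colour classes. The neighbourhoods
  of the two classes are disjoint subsets of H_i^4, and no vertex is adjacent to a whole class, so
  each class needs two dominators in H_i^4.

  If every vertex of H_i^4 has exactly one neighbour in D, the local conditions force
  x_(i,k) in D ==> x_(i+4,k) in D and x_(i+3,k) in D ==> x_(i-1,k) in D. A vertex outside H_i^4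
  whose dominator lies in H_i^4 is x_(i-1,k) or x_(i+4,k) with dominator x_(i,k) resp. x_(i+3,k),
  and the new edge of G_i^4 joins it to the forced vertex of the opposite row.
*)

lemma wrap_mod:
  assumes "0 < n"
  shows "wrap n x mod n = x mod n"
proof -
  have "wrap n x mod n = Suc ((x + n - 1) mod n) mod n"
    by (simp add: wrap_def)
  also have "\<dots> = Suc (x + n - 1) mod n"
    by (rule mod_Suc_eq)
  also have "Suc (x + n - 1) = x + n"
    using assms by simp
  finally show ?thesis by simp
qed

lemma wrap_eq_iff:
  assumes "0 < n"
  shows "wrap n x = wrap n y \<longleftrightarrow> x mod n = y mod n"
proof
  assume "wrap n x = wrap n y"
  then show "x mod n = y mod n"
    using wrap_mod[OF assms] by metis
next
  assume "x mod n = y mod n"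
  then have "(x + (n - 1)) mod n = (y + (n - 1)) mod n"
    by (rule mod_add_cong) (rule refl)
  then show "wrap n x = wrap n y"
    using assms by (simp add: wrap_def)
qed

lemma wrap_in_range: "0 < n \<Longrightarrow> wrap n x \<in> {1..n}"
  by (simp add: wrap_def Suc_leI)

lemma wrap_of_range:
  assumes "y \<in> {1..n}"
  shows "wrap n y = y"
proof -
  obtain k where "y = Suc k" "k < n"
    using assms by (cases y) auto
  then show ?thesis
    by (simp add: wrap_def)
qed

lemma wrap_Suc: "0 < n \<Longrightarrow> wrap n (Suc x) = wrap n x mod n + 1"
  by (simp add: wrap_def mod_Suc_eq wrap_mod)

lemma wrap_Suc_neq:
  assumes "2 \<le> n"
  shows "wrap n (Suc x) \<noteq> wrap n x"
  using assms by (auto simp: wrap_eq_iff mod_Suc)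

lemma cyc_adj_wrap_iff:
  assumes "2 \<le> n"
  shows "cyc_adj n (wrap n (Suc x)) y \<longleftrightarrow> y = wrap n x \<or> y = wrap n (Suc (Suc x))"
proof -
  have n: "0 < n" using assms by simp
  have range: "wrap n (Suc x) \<in> {1..n}" "wrap n x \<in> {1..n}" "wrap n (Suc (Suc x)) \<in> {1..n}"
    using n by (rule wrap_in_range)+
  have succ: "wrap n (Suc x) = wrap n x mod n + 1" "wrap n (Suc (Suc x)) = wrap n (Suc x) mod n + 1"
    using n by (rule wrap_Suc)+
  have neq: "wrap n (Suc x) \<noteq> wrap n x" "wrap n (Suc (Suc x)) \<noteq> wrap n (Suc x)"
    using assms by (rule wrap_Suc_neq)+
  have pred: "y = wrap n x" if y: "y \<in> {1..n}" and "wrap n (Suc x) = y mod n + 1"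
  proof -
    have "wrap n (Suc y) = wrap n (Suc x)"
      using wrap_Suc[OF n, of y] wrap_of_range[OF y] that(2) by simp
    then have "Suc y mod n = Suc x mod n"
      unfolding wrap_eq_iff[OF n] .
    then have "wrap n y = wrap n x"
      unfolding wrap_eq_iff[OF n] by (simp add: nat_mod_eq_iff)
    then show ?thesis
      using wrap_of_range[OF y] by simp
  qed
  show ?thesis
  proof
    assume "cyc_adj n (wrap n (Suc x)) y"
    then have y: "y \<in> {1..n}"
      and "y = wrap n (Suc x) mod n + 1 \<or> wrap n (Suc x) = y mod n + 1"
      unfolding cyc_adj_def by blast+
    from this(2) show "y = wrap n x \<or> y = wrap n (Suc (Suc x))"
    proof
      assume "y = wrap n (Suc x) mod n + 1"
      then show ?thesis using succ(2) by metis
    qed (blast intro: pred[OF y])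
  next
    assume "y = wrap n x \<or> y = wrap n (Suc (Suc x))"
    then show "cyc_adj n (wrap n (Suc x)) y"
    proof
      assume y: "y = wrap n x"
      show ?thesis
        unfolding cyc_adj_def y using range succ(1) neq(1) by blast
    next
      assume y: "y = wrap n (Suc (Suc x))"
      show ?thesis
        unfolding cyc_adj_def y using range succ(2) neq(2)[symmetric] by blast
    qed
  qed
qed

lemma cyc_adj_sym: "cyc_adj n x y \<longleftrightarrow> cyc_adj n y x"
  unfolding cyc_adj_def by auto

lemma gadj_sym: "gadj n m u v \<longleftrightarrow> gadj n m v u"
  unfolding gadj_def using cyc_adj_sym by auto

lemma nbhd_torus:
  assumes "2 \<le> n" "2 \<le> m"
  shows "nbhd (gverts n m) (gadj n m) (wrap n (Suc x), wrap m (Suc y)) =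
    {(wrap n x, wrap m (Suc y)), (wrap n (Suc (Suc x)), wrap m (Suc y)),
     (wrap n (Suc x), wrap m y), (wrap n (Suc x), wrap m (Suc (Suc y)))}"
    (is "_ = ?N")
proof -
  have n: "0 < n" and m: "0 < m"
    using assms by simp_all
  note range = wrap_in_range[OF n] wrap_in_range[OF m]
  have "gadj n m (wrap n (Suc x), wrap m (Suc y)) v \<longleftrightarrow> v \<in> ?N" for v
    using range by (cases v) (auto simp: gadj_def cyc_adj_wrap_iff assms)
  moreover have "?N \<subseteq> gverts n m"
    using range by (auto simp: gverts_def)
  ultimately show ?thesis
    unfolding nbhd_def by blast
qed

(* band n a (t, c) is the vertex x_(a+t, c); with a = i - 1 its rows 1..4 are H_i^4. *)
definition band :: "nat \<Rightarrow> nat \<Rightarrow> nat \<times> nat \<Rightarrow> nat \<times> nat" where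
  "band n a = (\<lambda>(t, c). (wrap n (a + t), c))"

(* Neighbourhood of (t, c) in the ladder with cyclic columns 1..4; only used for t >= 1. *)
definition ladder_nbhd :: "nat \<Rightarrow> nat \<Rightarrow> (nat \<times> nat) set" where
  "ladder_nbhd t c = {(t - 1, c), (t + 1, c), (t, wrap 4 (c - 1)), (t, wrap 4 (c + 1))}"

lemma nbhd_band:
  assumes "2 \<le> n" "1 \<le> t" "c \<in> {1..4}"
  shows "nbhd (gverts n 4) (gadj n 4) (band n a (t, c)) = band n a ` ladder_nbhd t c"
proof -
  have "Suc (a + (t - 1)) = a + t" "Suc (Suc (a + (t - 1))) = a + (t + 1)"
    "Suc (Suc (c - 1)) = c + 1" "wrap 4 (Suc (c - 1)) = c"
    using assms(2,3) wrap_of_range[OF assms(3)] by auto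
  then show ?thesis
    using nbhd_torus[OF assms(1), of 4 "a + (t - 1)" "c - 1"]
    by (simp add: band_def ladder_nbhd_def)
qed

lemma inj_on_band: "inj_on (band n a) ({..<n} \<times> UNIV)"
proof (rule inj_onI, clarify)
  fix s c s' c'
  assume "s < n" "s' < n" "band n a (s, c) = band n a (s', c')"
  then have "(a + s) mod n = (a + s') mod n" "c = c'"
    by (simp_all add: band_def wrap_eq_iff)
  then have "s mod n = s' mod n"
    by (simp add: nat_mod_eq_iff)
  then show "s = s' \<and> c = c'"
    using \<open>s < n\<close> \<open>s' < n\<close> \<open>c = c'\<close> by simp
qed

lemma Hset_band: "Hset n 4 (Suc a) 4 = band n a ` ({1..4} \<times> {1..4})"
proof (intro equalityI subsetI)
  fix v assume "v \<in> Hset n 4 (Suc a) 4"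
  then obtain t k where "v = (wrap n (Suc a + t), k)" "t < 4" "k \<in> {1..4}"
    unfolding Hset_def by blast
  then show "v \<in> band n a ` ({1..4} \<times> {1..4})"
    by (intro image_eqI[of _ _ "(Suc t, k)"]) (auto simp: band_def)
next
  fix v assume "v \<in> band n a ` ({1..4} \<times> {1..4})"
  then obtain t k where "v = band n a (t, k)" "t \<in> {1..4}" "k \<in> {1..4}"
    by auto
  then show "v \<in> Hset n 4 (Suc a) 4"
    unfolding Hset_def band_def by (intro CollectI exI[of _ "t - 1"] exI[of _ k]) auto
qed

lemma two_le_card_hitting:
  assumes "finite (\<Union>(N ` E))" "e \<in> E"
    and "\<And>e. e \<in> E \<Longrightarrow> N e \<inter> L \<noteq> {}" and "(\<Inter>e\<in>E. N e) = {}"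
  shows "2 \<le> card (\<Union>(N ` E) \<inter> L)"
proof -
  obtain u where u: "u \<in> N e" "u \<in> L"
    using assms(2,3) by blast
  then obtain e' where "e' \<in> E" "u \<notin> N e'"
    using assms(4) by blast
  moreover obtain v where v: "v \<in> N e'" "v \<in> L"
    using assms(3) \<open>e' \<in> E\<close> by blast
  ultimately have "u \<noteq> v"
    by blast
  then have "card {u, v} = 2"
    by simp
  moreover have "{u, v} \<subseteq> \<Union>(N ` E) \<inter> L"
    using u v assms(2) \<open>e' \<in> E\<close> by blast
  ultimately show ?thesis
    using assms(1) by (metis card_mono finite_Int)
qed

lemma four_le_card_ladder:
  fixes L :: "(nat \<times> nat) set"
  assumes "\<And>t c. t \<in> {2, 3} \<Longrightarrow> c \<in> {1..4} \<Longrightarrow> ladder_nbhd t c \<inter> L \<noteq> {}"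
  shows "4 \<le> card ({1..4} \<times> {1..4} \<inter> L)"
proof -
  let ?N = "\<lambda>(t, c). ladder_nbhd t c"
  \<comment> \<open>the two colour classes of the middle rows\<close>
  let ?E = "{(2, 2), (2, 4), (3, 1), (3, 3)}" and ?O = "{(2, 1), (2, 3), (3, 2), (3, 4)}"
  define A where "A = \<Union>(?N ` ?E)"
  define B where "B = \<Union>(?N ` ?O)"
  have hit: "?N x \<inter> L \<noteq> {}" if "x \<in> ?E \<union> ?O" for x
    using that assms by auto
  have "2 \<le> card (A \<inter> L)"
    unfolding A_def
  proof (rule two_le_card_hitting)
    show "(2, 2) \<in> ?E" by simp
    show "?N x \<inter> L \<noteq> {}" if "x \<in> ?E" for x
      using hit that by blast
  qed (simp_all add: ladder_nbhd_def wrap_def)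
  moreover have "2 \<le> card (B \<inter> L)"
    unfolding B_def
  proof (rule two_le_card_hitting)
    show "(2, 1) \<in> ?O" by simp
    show "?N x \<inter> L \<noteq> {}" if "x \<in> ?O" for x
      using hit that by blast
  qed (simp_all add: ladder_nbhd_def wrap_def)
  moreover have "card ((A \<union> B) \<inter> L) = card (A \<inter> L) + card (B \<inter> L)"
  proof -
    have "finite A" "finite B" "A \<inter> B = {}"
      unfolding A_def B_def by (simp_all add: ladder_nbhd_def wrap_def)
    moreover have "(A \<union> B) \<inter> L = A \<inter> L \<union> B \<inter> L"
      by blast
    ultimately show ?thesis
      by (simp add: card_Un_disjoint disjoint_iff)
  qed
  moreover have "card ((A \<union> B) \<inter> L) \<le> card ({1..4} \<times> {1..4} \<inter> L)"
  proof (rule card_mono)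
    have "A \<union> B \<subseteq> {1..4} \<times> {1..4}"
      unfolding A_def B_def by (simp add: ladder_nbhd_def wrap_def)
    then show "(A \<union> B) \<inter> L \<subseteq> {1..4} \<times> {1..4} \<inter> L"
      by blast
  qed simp
  ultimately show ?thesis
    by linarith
qed

lemma card_Int_four_eq_1D:
  assumes "distinct [w, x, y, z]" "card ({w, x, y, z} \<inter> L) = 1"
  shows "(w \<in> L \<or> x \<in> L \<or> y \<in> L \<or> z \<in> L) \<and>
    (w \<in> L \<longrightarrow> x \<notin> L \<and> y \<notin> L \<and> z \<notin> L) \<and> (x \<in> L \<longrightarrow> y \<notin> L \<and> z \<notin> L) \<and> (y \<in> L \<longrightarrow> z \<notin> L)"
proof -
  obtain u where u: "{w, x, y, z} \<inter> L = {u}"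
    using assms(2) by (rule card_1_singletonE)
  then have "u \<in> {w, x, y, z}" and mem: "\<And>v. v \<in> {w, x, y, z} \<Longrightarrow> v \<in> L \<longleftrightarrow> v = u"
    by blast+
  then show ?thesis
    using assms(1) by (simp only: distinct.simps set_simps) blast
qed

lemma distinct_ladder_nbhd:
  fixes t c :: nat
  assumes "1 \<le> t" "c \<in> {1..4}"
  shows "distinct [(t - 1, c), (t + 1, c), (t, wrap 4 (c - 1)), (t, wrap 4 (c + 1))]"
proof -
  have "c = 1 \<or> c = 2 \<or> c = 3 \<or> c = 4" using assms(2) by auto
  moreover have "t - 1 \<noteq> t + 1" using assms(1) by simp
  ultimately show ?thesis by (auto simp: wrap_def)
qed

lemma ladder_unique_dom_end_rows:
  fixes L :: "(nat \<times> nat) set"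
  assumes "\<And>t c. t \<in> {1..4} \<Longrightarrow> c \<in> {1..4} \<Longrightarrow> card (ladder_nbhd t c \<inter> L) = 1"
  shows "\<forall>c\<in>{1..4}. ((1, c) \<in> L \<longrightarrow> (5, c) \<in> L) \<and> ((4, c) \<in> L \<longrightarrow> (0, c) \<in> L)"
proof -
  have exactly_one: "\<forall>t\<in>{1..4}. \<forall>c\<in>{1..4}.
    ((t - 1, c) \<in> L \<or> (t + 1, c) \<in> L \<or> (t, wrap 4 (c - 1)) \<in> L \<or> (t, wrap 4 (c + 1)) \<in> L) \<and>
    ((t - 1, c) \<in> L \<longrightarrow> (t + 1, c) \<notin> L \<and> (t, wrap 4 (c - 1)) \<notin> L \<and> (t, wrap 4 (c + 1)) \<notin> L) \<and>
    ((t + 1, c) \<in> L \<longrightarrow> (t, wrap 4 (c - 1)) \<notin> L \<and> (t, wrap 4 (c + 1)) \<notin> L) \<and>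
    ((t, wrap 4 (c - 1)) \<in> L \<longrightarrow> (t, wrap 4 (c + 1)) \<notin> L)"
    (is "\<forall>t\<in>_. \<forall>c\<in>_. ?exactly_one t c")
  proof (intro ballI)
    fix t c :: nat
    assume t: "t \<in> {1..4}" and c: "c \<in> {1..4}"
    then have "1 \<le> t" by simp
    from card_Int_four_eq_1D[OF distinct_ladder_nbhd[OF this c] assms[OF t c, unfolded ladder_nbhd_def]]
    show "?exactly_one t c" .
  qed
  have four: "{1..4::nat} = {1, 2, 3, 4}"
    by auto
  \<comment> \<open>If (1, c) is in L, the conditions at (2, c), (1, c \<plusminus> 1) and (2, c + 2) force (3, c + 2)
    into L; then those at (3, c \<plusminus> 1) exclude (4, c \<plusminus> 1), so (5, c) is the only remaining
    L-neighbour of (4, c). The rule numeral_2_eq_2 is reversed because simp turns 1 + 1 into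
    Suc (Suc 0), which would not match the numeral 2 elsewhere.\<close>
  show ?thesis
    using exactly_one unfolding four
    by (simp (no_asm_use) add: wrap_def numeral_2_eq_2[symmetric]) sat
qed

lemma card_Int_image:
  assumes "inj_on f A"
  shows "card (D \<inter> f ` A) = card (A \<inter> f -` D)"
proof -
  have "D \<inter> f ` A = f ` (A \<inter> f -` D)"
    by auto
  moreover have "inj_on f (A \<inter> f -` D)"
    using assms by (rule inj_on_subset) auto
  ultimately show ?thesis
    by (simp add: card_image)
qed

lemma card_nbhd_band_Int:
  assumes "t + 1 < n" "1 \<le> t" "c \<in> {1..4}"
  shows "card (nbhd (gverts n 4) (gadj n 4) (band n a (t, c)) \<inter> D) =
    card (ladder_nbhd t c \<inter> band n a -` D)"
proof -
  have "ladder_nbhd t c \<subseteq> {..<n} \<times> UNIV"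
    using assms(1) by (auto simp: ladder_nbhd_def)
  then have "inj_on (band n a) (ladder_nbhd t c)"
    by (rule inj_on_subset[OF inj_on_band])
  moreover have "2 \<le> n"
    using assms(1,2) by simp
  ultimately show ?thesis
    using nbhd_band[of n t c a] assms(2,3) by (simp add: Int_commute card_Int_image)
qed

lemma band_notin_Hset:
  assumes "4 < n" "t < n" "t \<notin> {1..4}"
  shows "band n a (t, c) \<notin> Hset n 4 (Suc a) 4"
proof
  assume "band n a (t, c) \<in> Hset n 4 (Suc a) 4"
  then obtain s k where "s \<in> {1..4}" "band n a (t, c) = band n a (s, k)"
    unfolding Hset_band by auto
  moreover have "(t, c) \<in> {..<n} \<times> UNIV" "(s, k) \<in> {..<n} \<times> UNIV"
    using assms(1,2) \<open>s \<in> {1..4}\<close> by auto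
  ultimately show False
    using inj_onD[OF inj_on_band] assms(3) by blast
qed

lemma nbhd_band_outside_Hset:
  assumes "2 \<le> n" "s \<in> {1..4}" "k \<in> {1..4}"
    and "v \<in> nbhd (gverts n 4) (gadj n 4) (band n a (s, k))" "v \<notin> Hset n 4 (Suc a) 4"
  shows "(s = 1 \<and> v = band n a (0, k)) \<or> (s = 4 \<and> v = band n a (5, k))"
proof -
  obtain x where x: "x \<in> ladder_nbhd s k" "v = band n a x"
    using assms(1-4) nbhd_band[of n s k a] by auto
  then have x_out: "x \<notin> {1..4} \<times> {1..4}"
    using assms(5) unfolding Hset_band by auto
  have "wrap 4 z \<in> {1..4}" for z
    by (rule wrap_in_range) simp
  then have "x = (s - 1, k) \<or> x = (s + 1, k)"
    using x(1) x_out assms(2) unfolding ladder_nbhd_def by auto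
  then show ?thesis
  proof
    assume x_eq: "x = (s - 1, k)"
    then have "s = 1"
      using x_out assms(2,3) by auto
    then show ?thesis
      using x(2) x_eq by simp
  next
    assume x_eq: "x = (s + 1, k)"
    then have "s = 4"
      using x_out assms(2,3) by auto
    then show ?thesis
      using x(2) x_eq by simp
  qed
qed

lemma Gij_adj_band_ends:
  assumes "c \<in> {1..4}"
  shows "Gij_adj n (Suc a) 4 (band n a (0, c)) (band n a (5, c))"
    and "Gij_adj n (Suc a) 4 (band n a (5, c)) (band n a (0, c))"
proof -
  have ends: "Suc a - 1 = a + 0" "Suc a + 4 = a + 5"
    by simp_all
  show "Gij_adj n (Suc a) 4 (band n a (0, c)) (band n a (5, c))"
    and "Gij_adj n (Suc a) 4 (band n a (5, c)) (band n a (0, c))"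
    unfolding Gij_adj_def band_def prod.case ends using assms by blast+
qed

lemma four_le_card_Int_Hset:
  assumes "5 \<le> n" "total_dom (gverts n 4) (gadj n 4) D"
  shows "4 \<le> card (D \<inter> Hset n 4 (Suc a) 4)"
proof -
  have D: "D \<subseteq> gverts n 4"
    using assms(2) by (simp add: total_dom_def)
  have "ladder_nbhd t c \<inter> band n a -` D \<noteq> {}" if "t \<in> {2, 3}" "c \<in> {1..4}" for t c
  proof -
    have "band n a (t, c) \<in> gverts n 4"
      using that wrap_in_range[of n "a + t"] assms(1) by (simp add: band_def gverts_def)
    then obtain u where "u \<in> D" "gadj n 4 (band n a (t, c)) u"
      using assms(2) unfolding total_dom_def by blast
    moreover have "nbhd (gverts n 4) (gadj n 4) (band n a (t, c)) = band n a ` ladder_nbhd t c"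
      using that assms(1) by (intro nbhd_band) auto
    ultimately have "u \<in> band n a ` ladder_nbhd t c"
      using D unfolding nbhd_def by blast
    then show ?thesis
      using \<open>u \<in> D\<close> by blast
  qed
  then have "4 \<le> card ({1..4} \<times> {1..4} \<inter> band n a -` D)"
    by (rule four_le_card_ladder)
  also have "\<dots> = card (D \<inter> Hset n 4 (Suc a) 4)"
    unfolding Hset_band using assms(1)
    by (intro card_Int_image[symmetric] inj_on_subset[OF inj_on_band]) auto
  finally show ?thesis .
qed

lemma total_dom_Gij:
  assumes "6 \<le> n" "total_dom (gverts n 4) (gadj n 4) D"
    and "\<forall>v\<in>Hset n 4 (Suc a) 4. card (nbhd (gverts n 4) (gadj n 4) v \<inter> D) = 1"
  shows "total_dom (Gij_verts n (Suc a) 4) (Gij_adj n (Suc a) 4) (D - D \<inter> Hset n 4 (Suc a) 4)"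
    (is "total_dom _ _ (D - D \<inter> ?H)")
proof -
  have D: "D \<subseteq> gverts n 4"
    using assms(2) by (simp add: total_dom_def)
  have "card (ladder_nbhd t c \<inter> band n a -` D) = 1" if "t \<in> {1..4}" "c \<in> {1..4}" for t c
    using card_nbhd_band_Int[of t n c a D] assms(1,3) that unfolding Hset_band by force
  then have copy: "\<forall>c\<in>{1..4}. ((1, c) \<in> band n a -` D \<longrightarrow> (5, c) \<in> band n a -` D) \<and>
      ((4, c) \<in> band n a -` D \<longrightarrow> (0, c) \<in> band n a -` D)"
    by (rule ladder_unique_dom_end_rows)
  show ?thesis
    unfolding total_dom_def
  proof (intro conjI ballI)
    show "D - D \<inter> ?H \<subseteq> Gij_verts n (Suc a) 4"
      using D by (auto simp: Gij_verts_def)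
  next
    fix v assume v: "v \<in> Gij_verts n (Suc a) 4"
    then have "v \<in> gverts n 4" "v \<notin> ?H"
      by (auto simp: Gij_verts_def)
    then obtain u where u: "u \<in> D" "gadj n 4 v u"
      using assms(2) by (auto simp: total_dom_def)
    show "\<exists>w\<in>D - D \<inter> ?H. Gij_adj n (Suc a) 4 v w"
    proof (cases "u \<in> ?H")
      case False
      then show ?thesis
        using u v D by (auto simp: Gij_adj_def Gij_verts_def)
    next
      case True
      then obtain s k where s: "s \<in> {1..4}" "k \<in> {1..4}" and u_eq: "u = band n a (s, k)"
        unfolding Hset_band by auto
      have "v \<in> nbhd (gverts n 4) (gadj n 4) u"
        using \<open>v \<in> gverts n 4\<close> u(2) by (simp add: nbhd_def gadj_sym)
      then have "(s = 1 \<and> v = band n a (0, k)) \<or> (s = 4 \<and> v = band n a (5, k))"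
        using nbhd_band_outside_Hset[of n s k] assms(1) s \<open>v \<notin> ?H\<close> u_eq by simp
      moreover have "band n a (0, k) \<notin> ?H" "band n a (5, k) \<notin> ?H"
        using assms(1) by (simp_all add: band_notin_Hset)
      moreover have "band n a (1, k) \<in> D \<Longrightarrow> band n a (5, k) \<in> D"
        and "band n a (4, k) \<in> D \<Longrightarrow> band n a (0, k) \<in> D"
        using copy s(2) by auto
      ultimately show ?thesis
        using u(1) u_eq Gij_adj_band_ends[OF s(2)] by blast
    qed
  qed
qed

theorem lemma4p3:
  fixes n :: nat and D :: "(nat \<times> nat) set"
  assumes "n \<ge> 7"
    and "total_dom (gverts n 4) (gadj n 4) D"
  shows "(\<forall>i\<in>{1..n}. card (D \<inter> Hset n 4 i 4) \<ge> 4) \<and>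
         (\<forall>i\<in>{1..n}.
            (\<forall>v\<in>Hset n 4 i 4. card (nbhd (gverts n 4) (gadj n 4) v \<inter> D) = 1) \<longrightarrow>
            total_dom (Gij_verts n i 4) (Gij_adj n i 4) (D - (D \<inter> Hset n 4 i 4)))"
proof (intro conjI ballI impI)
  fix i assume "i \<in> {1..n}"
  then obtain a where "i = Suc a"
    by (cases i) auto
  moreover have "5 \<le> n"
    using assms(1) by simp
  ultimately show "4 \<le> card (D \<inter> Hset n 4 i 4)"
    using four_le_card_Int_Hset assms(2) by blast
next
  fix i assume "i \<in> {1..n}" "\<forall>v\<in>Hset n 4 i 4. card (nbhd (gverts n 4) (gadj n 4) v \<inter> D) = 1"
  moreover obtain a where "i = Suc a"
    using \<open>i \<in> {1..n}\<close> by (cases i) auto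
  moreover have "6 \<le> n"
    using assms(1) by simp
  ultimately show "total_dom (Gij_verts n i 4) (Gij_adj n i 4) (D - D \<inter> Hset n 4 i 4)"
    using total_dom_Gij assms(2) by blast
qed

end
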